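(* Let $K$ be a circle of radius $1$ and centre $O$. Let $A,B\in K$ be such that the triangle $OAB$ is positively (counter-clockwise) oriented and $\eta=\angle BOA<1/5$. Let $K_A$ and $K_B$ be the circles obtained by rotating $K$ about the points $A$ and $B$ in the positive direction by the angles $\alpha$ and $\beta$ respectively, where $0<\alpha<3\beta/4$ and $\beta<\eta$. Then one of the intersection points of $K_A$ and $K_B$ lies inside $K$, and its distance from $A$ is less than $20\eta$.
   Context: The positive direction of rotation is counter-clockwise. *)

theory Defs
  imports "HOL-Analysis.Analysis"
begin

definition rot :: "complex \<Rightarrow> real \<Rightarrow> complex \<Rightarrow> complex" where
  "rot c t z = c + cis t * (z - c)"

end

theory Submission
  imports Defs
begin

text \<open>Normalise \<open>O = 0\<close>, \<open>A = 1\<close>, \<open>B = cis \<eta>\<close> and write \<open>\<alpha> = 2a\<close>, \<open>\<beta> = 2b\<close>, \<open>\<eta> = 2h\<close>.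
  A rotated unit circle is the unit circle about the rotated centre, so \<open>K\<^sub>A\<close> is
  parametrised by \<open>q s = 1 + cis (2a) (cis (2s) - 1)\<close>, and \<open>q s \<in> K\<^sub>B\<close> iff
  \<open>\<bar>q s - c\<bar> = 1\<close> for \<open>c = cis (2h) (1 - cis (2b))\<close>. Writing chords as
  \<open>cis (2x) - 1 = 2 i sin x cis x\<close> gives \<open>\<bar>q s - c\<bar>\<^sup>2 - 1 = 8 F s\<close> with an explicit
  trigonometric \<open>F\<close>, negative at \<open>s = 0\<close> and positive at \<open>s = 8h\<close>; the intermediate
  value theorem yields the intersection point, and the same identity with \<open>c = 0\<close>
  shows \<open>\<bar>q s\<bar> < 1\<close>, while \<open>\<bar>q s - 1\<bar> = 2 \<bar>sin s\<bar> \<le> 16h\<close>.\<close>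

lemma rot_rot_neg [simp]: "rot c t (rot c (-t) z) = z"
  by (simp add: rot_def mult.assoc[symmetric] cis_mult)

lemma dist_rot [simp]: "dist (rot c t x) (rot c t y) = dist x y"
  by (simp add: rot_def dist_norm norm_mult right_diff_distrib[symmetric])

lemma rot_image_sphere: "rot c t ` sphere z r = sphere (rot c t z) r"
proof
  show "rot c t ` sphere z r \<subseteq> sphere (rot c t z) r" by auto
  show "sphere (rot c t z) r \<subseteq> rot c t ` sphere z r"
  proof
    fix y assume "y \<in> sphere (rot c t z) r"
    then have "rot c (-t) y \<in> sphere z r"
      using dist_rot[of c t z "rot c (-t) y"] by simp
    then show "y \<in> rot c t ` sphere z r" by (rule rev_image_eqI) simp
  qed
qed

lemma dist_mult_unit:
  assumes "cmod u = 1"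
  shows "dist (u * x) (u * y) = dist x y"
  by (simp add: dist_norm assms norm_mult right_diff_distrib[symmetric])

lemma cos_ge_one_minus_sq_half: "1 - x\<^sup>2 / 2 \<le> cos (x::real)"
proof -
  have "cos x = 1 - 2 * (sin (x/2))\<^sup>2" using cos_double_sin[of "x/2"] by simp
  moreover have "(sin (x/2))\<^sup>2 \<le> (x/2)\<^sup>2"
    by (metis abs_le_square_iff abs_sin_x_le_abs_x)
  ultimately show ?thesis by (simp add: power2_eq_square)
qed

lemma sin_ge_minus_cube: "x - \<bar>x\<bar> ^ 3 / 6 \<le> sin (x::real)"
proof -
  have "\<bar>sin x - (\<Sum>m<3. sin_coeff m * x ^ m)\<bar> \<le> inverse (fact 3) * \<bar>x\<bar> ^ 3"
    by (rule Maclaurin_sin_bound)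
  moreover have "(\<Sum>m<3. sin_coeff m * x ^ m) = x"
    by (simp add: lessThan_nat_numeral sin_coeff_def)
  ultimately have "\<bar>sin x - x\<bar> \<le> \<bar>x\<bar> ^ 3 / 6" by (simp add: fact_numeral)
  then show ?thesis unfolding abs_le_iff by linarith
qed

lemma sin_diff_ge_mult_cos:
  assumes "0 \<le> a" "a < b" "b \<le> pi"
  shows "(b - a) * cos b \<le> sin b - sin a"
proof -
  obtain z where z: "a < z" "z < b" "sin b - sin a = (b - a) * cos z"
    using MVT2[of a b sin cos] assms(2) by (auto intro: DERIV_sin)
  have "cos b \<le> cos z" using z assms by (intro cos_monotone_0_pi_le) auto
  then show ?thesis using z assms by (simp add: mult_left_mono)
qed

lemma sin_eight_times_ge:
  fixes h :: real
  assumes "0 \<le> h" "h < 1/10"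
  shows "7 * h \<le> sin (8 * h)"
proof -
  have "h * h\<^sup>2 \<le> h * (1/10)\<^sup>2"
    using assms by (intro mult_left_mono power_mono) auto
  then show ?thesis
    using sin_ge_minus_cube[of "8 * h"] assms
    by (simp add: power_mult_distrib power3_eq_cube power2_eq_square)
qed

lemma cis_double_minus_one: "cis (2*x) - 1 = 2 * \<i> * complex_of_real (sin x) * cis x"
  by (simp add: complex_eq_iff cos_double_sin sin_double power2_eq_square)

lemma norm_cis_double_minus_one: "cmod (cis (2*x) - 1) = 2 * \<bar>sin x\<bar>"
  by (simp add: cis_double_minus_one norm_mult)

lemma norm_one_plus_two_i_sq:
  "(cmod (1 + 2*\<i>*(complex_of_real p * cis x + complex_of_real q * cis y)))\<^sup>2 - 1
     = 4*(p\<^sup>2 + q\<^sup>2 + 2*p*q*cos (x - y)) - 4*(p * sin x + q * sin y)"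
proof -
  have "(cmod (1 + 2*\<i>*(complex_of_real p * cis x + complex_of_real q * cis y)))\<^sup>2
     = (1 - 2*(p * sin x + q * sin y))\<^sup>2 + (2*(p * cos x + q * cos y))\<^sup>2"
    unfolding cmod_power2 by (simp add: algebra_simps)
  also have "\<dots> = 1 + 4*(p\<^sup>2*((sin x)\<^sup>2 + (cos x)\<^sup>2) + q\<^sup>2*((sin y)\<^sup>2 + (cos y)\<^sup>2)
      + 2*p*q*(cos x * cos y + sin x * sin y)) - 4*(p * sin x + q * sin y)"
    by (simp add: power2_eq_square algebra_simps
        del: sin_cos_squared_add sin_cos_squared_add2 sin_cos_squared_add3)
  finally show ?thesis by (simp add: cos_diff)
qed

lemma sin_minus_sin_shift: "sin (t::real) - sin (2*a + t) = - 2 * sin a * cos (a + t)"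
proof -
  have "(t - (2*a + t)) / 2 = -a" "(t + (2*a + t)) / 2 = a + t" by simp_all
  then show ?thesis by (simp only: sin_diff_sin sin_minus)
qed

lemma norm_sum_chords_sq:
  fixes a b h t :: real
  shows "(cmod (1 + cis (2*a) * (cis (2*t) - 1) - cis (2*h) * (1 - cis (2*b))))\<^sup>2 - 1
   = 8*(sin t * sin b * cos (2*a+t-2*h-b) - sin t * sin a * cos (a+t) - sin b * sin h * cos (h+b))"
proof -
  have "1 + cis (2*a) * (cis (2*t) - 1) - cis (2*h) * (1 - cis (2*b))
     = 1 + cis (2*a) * (cis (2*t) - 1) + cis (2*h) * (cis (2*b) - 1)"
    by (simp add: algebra_simps)
  also have "\<dots> = 1 + 2*\<i>*(complex_of_real (sin t) * cis (2*a+t)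
                          + complex_of_real (sin b) * cis (2*h+b))"
    unfolding cis_double_minus_one by (simp add: algebra_simps flip: cis_mult)
  finally have chords: "1 + cis (2*a) * (cis (2*t) - 1) - cis (2*h) * (1 - cis (2*b))
     = 1 + 2*\<i>*(complex_of_real (sin t) * cis (2*a+t) + complex_of_real (sin b) * cis (2*h+b))" .
  have "(cmod (1 + cis (2*a) * (cis (2*t) - 1) - cis (2*h) * (1 - cis (2*b))))\<^sup>2 - 1
     = 4*((sin t)\<^sup>2 + (sin b)\<^sup>2 + 2 * sin t * sin b * cos ((2*a+t) - (2*h+b)))
       - 4*(sin t * sin (2*a+t) + sin b * sin (2*h+b))"
    unfolding chords by (rule norm_one_plus_two_i_sq)
  also have "\<dots> = 8 * sin t * sin b * cos (2*a+t-2*h-b)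
      + 4 * sin t * (sin t - sin (2*a+t)) + 4 * sin b * (sin b - sin (2*h+b))"
    by (simp add: power2_eq_square algebra_simps)
  also have "\<dots> = 8*(sin t * sin b * cos (2*a+t-2*h-b) - sin t * sin a * cos (a+t)
                      - sin b * sin h * cos (h+b))"
    unfolding sin_minus_sin_shift by (simp add: algebra_simps)
  finally show ?thesis .
qed

lemma sum_chords_pos_at_eight_h:
  fixes a b h :: real
  assumes "0 < a" "a < 3*b/4" "b < h" "h < 1/10"
  shows "0 < sin (8*h) * sin b * cos (2*a+8*h-2*h-b) - sin (8*h) * sin a * cos (a+8*h)
              - sin b * sin h * cos (h+b)"
proof -
  have b0: "0 < b" and h0: "0 < h" and pi2: "2 \<le> pi"
    using assms pi_ge_two by linarith+
  have s8: "7 * h \<le> sin (8*h)" using sin_eight_times_ge assms h0 by simp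
  have "cos (a+8*h) \<le> cos (2*a+8*h-2*h-b)"
    using assms pi2 by (intro cos_monotone_0_pi_le) linarith+
  then have mono: "sin (8*h) * sin b * cos (a+8*h) \<le> sin (8*h) * sin b * cos (2*a+8*h-2*h-b)"
    using s8 b0 assms pi2 by (intro mult_left_mono mult_nonneg_nonneg sin_ge_zero) linarith+
  have "(a+8*h)\<^sup>2 \<le> (7/8)\<^sup>2" using assms by (intro power_mono) auto
  then have cos_a8h: "61/100 \<le> cos (a+8*h)"
    using cos_ge_one_minus_sq_half[of "a+8*h"] by (simp add: power2_eq_square)
  have "b\<^sup>2 \<le> (1/10)\<^sup>2" using assms b0 by (intro power_mono) auto
  then have "99/100 \<le> cos b"
    using cos_ge_one_minus_sq_half[of b] by (simp add: power2_eq_square)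
  then have "b/4 * (99/100) \<le> (b - a) * cos b"
    using assms b0 by (intro mult_mono) linarith+
  then have sin_gap: "b/4 * (99/100) \<le> sin b - sin a"
    using sin_diff_ge_mult_cos[of a b] assms pi2 by linarith
  have lower: "7*h * (61/100) * (b/4 * (99/100)) \<le> sin (8*h) * cos (a+8*h) * (sin b - sin a)"
    using s8 cos_a8h sin_gap h0 b0 by (intro mult_mono) auto
  have upper: "sin b * sin h * cos (h+b) \<le> b * h * 1"
    using sin_x_le_x[of b] sin_x_le_x[of h] b0 h0 assms pi2
    by (intro mult_mono mult_nonneg_nonneg sin_ge_zero cos_ge_zero) auto
  have "b * h * 1 < 7*h * (61/100) * (b/4 * (99/100))" using b0 h0 by simp
  with mono lower upper show ?thesis by (simp add: algebra_simps)
qed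

lemma rotated_unit_circles_meet_near_one:
  fixes a b h :: real
  assumes "0 < a" "a < 3*b/4" "b < h" "h < 1/10"
  shows "\<exists>p. dist p (1 - cis (2*a)) = 1 \<and> dist p (cis (2*h) * (1 - cis (2*b))) = 1
             \<and> cmod p < 1 \<and> cmod (p - 1) \<le> 16 * h"
proof -
  have b0: "0 < b" and h0: "0 < h" and pi2: "2 \<le> pi"
    using assms pi_ge_two by linarith+
  define q where "q t = 1 + cis (2*a) * (cis (2*t) - 1)" for t
  define c where "c = cis (2*h) * (1 - cis (2*b))"
  define F where "F t = sin t * sin b * cos (2*a+t-2*h-b) - sin t * sin a * cos (a+t)
                          - sin b * sin h * cos (h+b)" for t
  have dist_c_sq: "(dist (q t) c)\<^sup>2 - 1 = 8 * F t" for t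
    using norm_sum_chords_sq[of a t h b] by (simp add: q_def c_def F_def dist_norm)
  have "0 < sin b * sin h * cos (h+b)"
    using assms b0 h0 pi2 by (intro mult_pos_pos sin_gt_zero cos_gt_zero) linarith+
  then have "F 0 \<le> 0" by (simp add: F_def)
  moreover have "0 \<le> F (8*h)"
    using sum_chords_pos_at_eight_h[OF assms] by (simp add: F_def)
  moreover have "continuous_on {0..8*h} F"
    unfolding F_def by (intro continuous_intros)
  ultimately obtain t where t: "0 \<le> t" "t \<le> 8*h" "F t = 0"
    using IVT'[of F 0 0 "8*h"] h0 by auto
  have "t \<noteq> 0" using t(3) \<open>0 < sin b * sin h * cos (h+b)\<close> by (auto simp: F_def)
  with t have t0: "0 < t" by simp
  have "(dist (q t) c)\<^sup>2 = 1" using dist_c_sq[of t] t(3) by simp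
  then have on_K_B: "dist (q t) c = 1"
    using zero_le_dist[of "q t" c] by (auto simp: power2_eq_1_iff)
  have "0 < sin t * sin a * cos (a+t)"
    using assms t t0 pi2 by (intro mult_pos_pos sin_gt_zero cos_gt_zero) linarith+
  moreover have "(cmod (q t))\<^sup>2 - 1 = - 8 * (sin t * sin a * cos (a+t))"
    using norm_sum_chords_sq[of a t h 0] by (simp add: q_def)
  ultimately have "(cmod (q t))\<^sup>2 < 1" by linarith
  then have inside: "cmod (q t) < 1" by (simp add: abs_square_less_1)
  have "cmod (q t - 1) = 2 * \<bar>sin t\<bar>"
    by (simp add: q_def norm_mult norm_cis_double_minus_one)
  also have "\<dots> \<le> 16 * h" using abs_sin_x_le_abs_x[of t] t by simp
  finally have near_one: "cmod (q t - 1) \<le> 16 * h" .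
  have "dist (q t) (1 - cis (2*a)) = 1" by (simp add: q_def dist_norm algebra_simps norm_mult)
  with on_K_B inside near_one show ?thesis unfolding c_def by blast
qed

theorem lemma2:
  fixes Oc A B :: complex and \<eta> \<alpha> \<beta> :: real
  assumes "A \<in> sphere Oc 1" and "B \<in> sphere Oc 1"
    and "0 < \<eta>" and "\<eta> < 1/5"
    and "B = rot Oc \<eta> A"
    and "0 < \<alpha>" and "\<alpha> < 3 * \<beta> / 4" and "\<beta> < \<eta>"
  shows "\<exists>P. P \<in> rot A \<alpha> ` sphere Oc 1 \<and> P \<in> rot B \<beta> ` sphere Oc 1
             \<and> P \<in> ball Oc 1 \<and> dist P A < 20 * \<eta>"
proof -
  define u where "u = A - Oc"
  have u: "cmod u = 1" using assms(1) by (simp add: u_def dist_norm norm_minus_commute)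
  have A: "A = Oc + u * 1" by (simp add: u_def)
  have centre_A: "rot A \<alpha> Oc = Oc + u * (1 - cis \<alpha>)"
    by (simp add: rot_def u_def algebra_simps)
  have centre_B: "rot B \<beta> Oc = Oc + u * (cis \<eta> * (1 - cis \<beta>))"
    unfolding assms(5) by (simp add: rot_def u_def algebra_simps)
  obtain p where p: "dist p (1 - cis \<alpha>) = 1" "dist p (cis \<eta> * (1 - cis \<beta>)) = 1"
      "cmod p < 1" "cmod (p - 1) \<le> 8 * \<eta>"
    using rotated_unit_circles_meet_near_one[of "\<alpha>/2" "\<beta>/2" "\<eta>/2"] assms(3,4,6-8) by auto
  have "dist Oc (Oc + u * p) < 1" using u p(3) by (simp add: dist_norm norm_mult)
  moreover have "dist (Oc + u * p) A < 20 * \<eta>"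
    using dist_mult_unit[OF u, of p 1] A p(4) assms(3) by (simp add: dist_norm)
  ultimately show ?thesis
    using p(1,2) unfolding rot_image_sphere centre_A centre_B
    by (intro exI[of _ "Oc + u * p"]) (simp add: dist_mult_unit[OF u] dist_commute)
qed

end
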